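(* Let $V^{2n}$ be a real vector space with $J\in\mathrm{Aut}(V)$, $J^2=-I$, and a positive definite inner product $(\,,\,)$ for which $J$ is an isometry. Let $\mathbb{L}^p$, $p\geq 2$, be a real vector space with a Lorentzian inner product $\langle\,,\,\rangle$, let $\alpha\colon V^{2n}\times V^{2n}\to\mathbb{L}^p$ be a symmetric bilinear form, and suppose there is a light-like $w\in\mathbb{L}^p$ with $\langle\alpha(X,Y),w\rangle=-(X,Y)$ for all $X,Y$. Let $\beta,\gamma\colon V^{2n}\times V^{2n}\to W^{p,p}$ be defined by $\beta(X,Y)=(\alpha(X,Y)+\alpha(JX,JY),\alpha(X,JY)-\alpha(JX,Y))$ and $\gamma(X,Y)=(\alpha(X,Y),\alpha(X,JY))$. Assume $\beta$ is flat and $$\langle\!\langle\beta(X,Y),\gamma(Z,T)\rangle\!\rangle=\langle\!\langle\beta(X,T),\gamma(Z,Y)\rangle\!\rangle\quad\text{for all }X,Y,Z,T\in V^{2n}.$$ If $\mathcal{S}(\beta)$ is degenerate and $s\leq n-1$, then there is a $J$-invariant vector subspace $P^{2m}\subset V^{2n}$ with $m\geq n-s+1$ such that $$\langle\alpha(S,S),\alpha(JS,JS)\rangle-\langle\alpha(S,JS),\alpha(S,JS)\rangle\leq 0\quad\text{for all }S\in P^{2m}.$$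
   Context: $W^{p,p}=\mathbb{L}^p\oplus\mathbb{L}^p$ carries the inner product $\langle\!\langle(\xi,\bar\xi),(\eta,\bar\eta)\rangle\!\rangle=\langle\xi,\eta\rangle-\langle\bar\xi,\bar\eta\rangle$. $\beta$ is flat if $\langle\!\langle\beta(X,Y),\beta(Z,T)\rangle\!\rangle=\langle\!\langle\beta(X,T),\beta(Z,Y)\rangle\!\rangle$ for all $X,Y,Z,T$. $\mathcal{S}(\beta)=\mathrm{span}\{\beta(X,Y):X,Y\in V\}$; it is degenerate if $\mathcal S(\beta)\cap\mathcal S(\beta)^\perp\neq0$ with respect to $\langle\!\langle\,,\,\rangle\!\rangle$. $s=\dim U_0^s$, where $U_0^s=\pi_1(\mathcal{S}(\beta))\subset\mathbb{L}^p$ is the projection of $\mathcal S(\beta)$ onto the first factor. *)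

theory Defs
  imports "HOL-Analysis.Analysis"
begin

definition lorentzian :: "('l::euclidean_space \<Rightarrow> 'l \<Rightarrow> real) \<Rightarrow> bool" where
  "lorentzian g \<longleftrightarrow>
     (\<forall>x. linear (g x)) \<and> (\<forall>x y. g x y = g y x) \<and>
     (\<exists>B. independent B \<and> span B = UNIV \<and>
          (\<forall>b\<in>B. \<forall>c\<in>B. b \<noteq> c \<longrightarrow> g b c = 0) \<and>
          (\<exists>e\<in>B. g e e = -1 \<and> (\<forall>b\<in>B - {e}. g b b = 1)))"

definition Wip :: "('l \<Rightarrow> 'l \<Rightarrow> real) \<Rightarrow> 'l \<times> 'l \<Rightarrow> 'l \<times> 'l \<Rightarrow> real" where
  "Wip g u v = g (fst u) (fst v) - g (snd u) (snd v)"

definition flat_form :: "('l \<Rightarrow> 'l \<Rightarrow> real) \<Rightarrow> ('v \<Rightarrow> 'v \<Rightarrow> 'l \<times> 'l) \<Rightarrow> bool" where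
  "flat_form g \<beta> \<longleftrightarrow>
     (\<forall>X Y Z T. Wip g (\<beta> X Y) (\<beta> Z T) = Wip g (\<beta> X T) (\<beta> Z Y))"

definition Sspace :: "('v \<Rightarrow> 'v \<Rightarrow> 'l::real_vector \<times> 'l) \<Rightarrow> ('l \<times> 'l) set" where
  "Sspace \<beta> = span {\<beta> X Y | X Y. True}"

definition degenerate_sub :: "('l \<Rightarrow> 'l \<Rightarrow> real) \<Rightarrow> ('l::real_vector \<times> 'l) set \<Rightarrow> bool" where
  "degenerate_sub g S \<longleftrightarrow> (\<exists>v\<in>S. v \<noteq> 0 \<and> (\<forall>u\<in>S. Wip g v u = 0))"

end

theory Submission
  imports Defs
begin

text \<open>Put b(X,Y) = \<alpha>(X,Y) + \<alpha>(JX,JY). Then \<beta> = (b, -b(J\<cdot>,\<cdot>)), so flatness of \<beta> is an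
  identity for b alone, and a nonzero vector in the radical of S(\<beta>) yields a light-like
  z \<in> U_0^s orthogonal to the whole image of b. In a Lorentzian space every null vector
  orthogonal to z is a multiple of z.

  Starting from V and D = U_0^s, pick Y with b(Y,Y) \<notin> \<real>z and pass to the J-invariant
  subspace N of all X with b(Y,X), b(Y,JX) \<in> \<real>z, and to the subspace D' of D orthogonal to
  b(Y,V). Flatness gives b(N,N) \<subseteq> D', and a dimension count in R = b(Y,V) + \<real>z shows that
  dim V - dim N is at most twice the drop dim D - dim D' > 0. Iterating until b(S,S) \<in> \<real>z on
  the whole subspace gives a J-invariant P, of even dimension, with dim V + 2 \<le> dim P + 2s.

  For S \<in> P let A = \<alpha>(S,S), B = \<alpha>(JS,JS), C = \<alpha>(S,JS). Then A + B is null, while A - B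
  and C are orthogonal to the light-like w and hence have nonnegative square; so
  4\<langle>A,B\<rangle> = -\<langle>A-B,A-B\<rangle> \<le> 0 \<le> \<langle>C,C\<rangle>.\<close>

lemma symmetric_bilinear_simps:
  fixes h :: "'a::real_vector \<Rightarrow> 'a \<Rightarrow> 'c::real_vector"
  assumes lin: "\<And>x. linear (h x)" and sym: "\<And>x y. h x y = h y x"
  shows "h a (b + c) = h a b + h a c" "h (b + c) a = h b a + h c a"
    "h a (b - c) = h a b - h a c" "h (b - c) a = h b a - h c a"
    "h a (- b) = - h a b" "h (- b) a = - h b a"
    "h a (r *\<^sub>R b) = r *\<^sub>R h a b" "h (r *\<^sub>R b) a = r *\<^sub>R h b a"
    "h a 0 = 0" "h 0 a = 0"
  using linear_add[OF lin] linear_diff[OF lin] linear_neg[OF lin] linear_scale[OF lin] linear_0[OF lin]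
  by (simp_all add: sym[of _ a])

lemma dim_image_add_dim_kernel:
  fixes f :: "'a::euclidean_space \<Rightarrow> 'b::real_vector"
  assumes f: "linear f" and V: "subspace V"
  shows "dim (f ` V) + dim {x\<in>V. f x = 0} = dim V"
proof -
  define K where "K = {x\<in>V. f x = 0}"
  define W where "W = {y\<in>V. \<forall>x\<in>K. orthogonal x y}"
  have K: "subspace K"
    using V f by (auto simp: K_def subspace_def linear_add linear_scale linear_0)
  have W: "subspace W"
    using V by (auto simp: W_def subspace_def orthogonal_clauses)
  have dim_W: "dim W + dim K = dim V"
    unfolding W_def by (rule dim_subspace_orthogonal_to_vectors[OF K V]) (auto simp: K_def)
  have "inj_on f W"
    unfolding linear_inj_on_iff_eq_0[OF f W]
    by (auto simp: W_def K_def orthogonal_self)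
  moreover have "span W = W" using W by (simp add: span_eq_iff)
  ultimately have "dim (f ` W) = dim W"
    using dim_image_eq[OF f, of W] by metis
  moreover have "f ` V \<subseteq> f ` W"
  proof
    fix u assume "u \<in> f ` V"
    then obtain v where v: "v \<in> V" "u = f v" by auto
    obtain y y' where y: "y \<in> span K" "\<And>x. x \<in> span K \<Longrightarrow> orthogonal y' x" "v = y + y'"
      using orthogonal_subspace_decomp_exists[of K v] by blast
    have "y \<in> K" using y(1) K by (metis span_eq_iff)
    moreover have "y' = v - y" using y(3) by simp
    ultimately have "y' \<in> V" "f y' = f v"
      using subspace_diff[OF V v(1)] f by (auto simp: K_def linear_diff)
    moreover have "\<forall>x\<in>K. orthogonal x y'"
      using y(2) by (auto simp: orthogonal_commute span_base)
    ultimately have "y' \<in> W" "u = f y'" using v by (auto simp: W_def)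
    then show "u \<in> f ` W" by blast
  qed
  then have "f ` W = f ` V" by (auto simp: W_def)
  ultimately show ?thesis using dim_W by (simp add: K_def)
qed

lemma dim_add_le_dim_Int:
  fixes A :: "'a::euclidean_space set"
  assumes A: "subspace A" and B: "subspace B" and D: "subspace D" and "A \<subseteq> D" "B \<subseteq> D"
  shows "dim A + dim B \<le> dim D + dim (A \<inter> B)"
proof -
  have "{x + y |x y. x \<in> A \<and> y \<in> B} \<subseteq> D"
    using assms(4,5) subspace_add[OF D] by auto
  then have "dim {x + y |x y. x \<in> A \<and> y \<in> B} \<le> dim D" by (rule dim_subset)
  then show ?thesis using dim_sums_Int[OF A B] by linarith
qed

lemma dim_vimage_span_singleton:
  fixes h :: "'a::euclidean_space \<Rightarrow> 'b::euclidean_space"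
  assumes h: "linear h" and V: "subspace V" and "z \<noteq> 0"
  shows "dim V + 1 = dim {X\<in>V. h X \<in> span {z}} + dim {x + y |x y. x \<in> h ` V \<and> y \<in> span {z}}"
proof -
  let ?N = "{X\<in>V. h X \<in> span {z}}"
  have N: "subspace ?N"
    using V h by (auto simp: subspace_def linear_add linear_scale linear_0 span_add span_scale span_zero)
  have "dim {x + y |x y. x \<in> h ` V \<and> y \<in> span {z}} + dim (h ` V \<inter> span {z}) = dim (h ` V) + 1"
    using dim_sums_Int[OF linear_subspace_image[OF h V] subspace_span] \<open>z \<noteq> 0\<close> by simp
  moreover have "h ` ?N = h ` V \<inter> span {z}" by auto
  moreover have "{x\<in>?N. h x = 0} = {x\<in>V. h x = 0}" by (auto simp: span_zero)
  ultimately show ?thesis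
    using dim_image_add_dim_kernel[OF h V] dim_image_add_dim_kernel[OF h N] by simp
qed

locale isometric_complex_structure =
  fixes J :: "'v::euclidean_space \<Rightarrow> 'v"
  assumes J_lin: "linear J" and J_sq: "\<And>X. J (J X) = - X"
    and J_isom: "\<And>X Y. inner (J X) (J Y) = inner X Y"
begin

lemma inner_J_left: "inner (J X) Y = - inner X (J Y)"
  using J_isom[of "J X" Y] by (simp add: J_sq)

lemma inner_J_self: "inner X (J X) = 0"
  using inner_J_left[of X X] by (simp add: inner_commute)

lemma J_invariant_orthogonal_complement:
  assumes P: "subspace P" "J ` P \<subseteq> P" and A: "subspace A" "A \<subseteq> P" "J ` A \<subseteq> A"
  defines "Q \<equiv> {y\<in>P. \<forall>a\<in>A. orthogonal a y}"
  shows "subspace Q" "J ` Q \<subseteq> Q" "dim Q + dim A = dim P"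
proof -
  show "subspace Q"
    using P by (auto simp: Q_def subspace_def orthogonal_clauses)
  show "dim Q + dim A = dim P"
    unfolding Q_def by (rule dim_subspace_orthogonal_to_vectors[OF A(1) P(1) A(2)])
  have "orthogonal a (J y)" if "a \<in> A" "\<forall>a\<in>A. orthogonal a y" for a y
  proof -
    have "J a \<in> A" using that(1) A(3) by auto
    then show ?thesis using that(2) inner_J_left[of a y] by (auto simp: orthogonal_def)
  qed
  then show "J ` Q \<subseteq> Q" using P(2) by (auto simp: Q_def)
qed

lemma even_dim_J_invariant:
  "subspace P \<Longrightarrow> J ` P \<subseteq> P \<Longrightarrow> even (dim P)"
proof (induction "dim P" arbitrary: P rule: less_induct)
  case less
  show ?case
  proof (cases "P \<subseteq> {0}")
    case True
    then show ?thesis by (metis dim_eq_0 even_zero)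
  next
    case False
    then obtain x where x: "x \<in> P" "x \<noteq> 0" by auto
    let ?A = "span {x, J x}"
    have "J x \<in> P" using x less.prems by auto
    then have AP: "?A \<subseteq> P" using x less.prems(1) by (simp add: span_minimal)
    have "J ` ?A = span {J x, - x}"
      using span_linear_image[OF J_lin, of "{x, J x}"] by (simp add: J_sq)
    then have JA: "J ` ?A \<subseteq> ?A"
      by (simp add: span_minimal span_base span_neg)
    have "x \<notin> span {J x}"
    proof
      assume "x \<in> span {J x}"
      then obtain c where "x = c *\<^sub>R J x" by (auto simp: span_singleton)
      then have "inner x x = c * inner x (J x)" by (metis inner_commute inner_scaleR_left)
      then show False using x(2) by (simp add: inner_J_self)
    qed
    moreover have "J x \<noteq> 0" using x(2) J_sq[of x] by (auto simp: linear_0[OF J_lin])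
    ultimately have dim_A: "dim ?A = 2" by (simp add: dim_insert)
    let ?Q = "{y\<in>P. \<forall>a\<in>?A. orthogonal a y}"
    note Q = J_invariant_orthogonal_complement[OF less.prems subspace_span AP JA]
    have "dim ?Q < dim P" using Q(3) dim_A by linarith
    then have "even (dim ?Q)" by (rule less.hyps[OF _ Q(1,2)])
    moreover have "dim P = dim ?Q + 2" using Q(3) dim_A by linarith
    ultimately show ?thesis by simp
  qed
qed

end

lemma bilinear_sum_orthogonal_basis:
  fixes g :: "'a::real_vector \<Rightarrow> 'a \<Rightarrow> real"
  assumes g_lin: "\<And>x. linear (g x)" and g_sym: "\<And>x y. g x y = g y x"
    and "finite B" and orth: "\<forall>b\<in>B. \<forall>c\<in>B. b \<noteq> c \<longrightarrow> g b c = 0" and "b \<in> B"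
  shows "g b (\<Sum>c\<in>B. u c *\<^sub>R c) = u b * g b b"
proof -
  have "g b (\<Sum>c\<in>B. u c *\<^sub>R c) = (\<Sum>c\<in>B. u c * g b c)"
    by (simp add: linear_sum[OF g_lin] linear_scale[OF g_lin])
  also have "\<dots> = (\<Sum>c\<in>B. if c = b then u b * g b b else 0)"
    by (rule sum.cong) (use orth \<open>b \<in> B\<close> in auto)
  finally show ?thesis using assms(3,5) by simp
qed

lemma lorentzian_spacelike_complement:
  fixes g :: "'l::euclidean_space \<Rightarrow> 'l \<Rightarrow> real"
  assumes "lorentzian g"
  obtains e where "g e e = -1" "\<And>y. g y e = 0 \<Longrightarrow> y \<noteq> 0 \<Longrightarrow> g y y > 0"
proof -
  have g_lin: "\<And>x. linear (g x)" and g_sym: "\<And>x y. g x y = g y x"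
    using assms unfolding lorentzian_def by auto
  obtain B e where B: "independent B" "span B = UNIV"
    and orth: "\<forall>b\<in>B. \<forall>c\<in>B. b \<noteq> c \<longrightarrow> g b c = 0"
    and e: "e \<in> B" "g e e = -1" and ones: "\<And>b. b \<in> B - {e} \<Longrightarrow> g b b = 1"
    using assms unfolding lorentzian_def by blast
  have fin: "finite B" using B(1) by (simp add: finiteI_independent)
  note coeff = bilinear_sum_orthogonal_basis[OF g_lin g_sym fin orth]
  have pos: "g y y > 0" if "g y e = 0" "y \<noteq> 0" for y
  proof -
    obtain u where y: "y = (\<Sum>b\<in>B. u b *\<^sub>R b)"
      using B(2) span_finite[OF fin] by auto
    have u: "g b y = u b * g b b" if "b \<in> B" for b
      using coeff[OF that] y by simp
    have "u e = 0" using u[OF e(1)] that(1) e(2) g_sym[of y e] by simp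
    have "g y y = (\<Sum>b\<in>B. u b * g y b)"
      by (subst (2) y) (simp add: linear_sum[OF g_lin] linear_scale[OF g_lin])
    also have "\<dots> = (\<Sum>b\<in>B. u b * u b * g b b)"
      by (rule sum.cong) (simp_all add: g_sym[of y] u)
    also have "\<dots> = (\<Sum>b\<in>B - {e}. u b * u b)"
      using fin e \<open>u e = 0\<close> ones by (simp add: sum.remove)
    finally have yy: "g y y = (\<Sum>b\<in>B - {e}. u b * u b)" .
    obtain c where "c \<in> B - {e}" "u c \<noteq> 0"
    proof (rule ccontr)
      assume "\<not> thesis"
      then have "\<forall>b\<in>B. u b = 0" using that \<open>u e = 0\<close> by blast
      then show False using \<open>y \<noteq> 0\<close> y by simp
    qed
    moreover have "0 < u c * u c"
      using \<open>u c \<noteq> 0\<close> by (metis linorder_neq_iff mult_neg_neg mult_pos_pos)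
    ultimately show ?thesis
      unfolding yy using fin by (intro sum_pos2[of _ c]) simp_all
  qed
  show ?thesis by (rule that[OF e(2) pos])
qed

lemma lorentzian_orthogonal_null:
  fixes g :: "'l::euclidean_space \<Rightarrow> 'l \<Rightarrow> real"
  assumes lor: "lorentzian g" and "z \<noteq> 0" "g z z = 0" "g x z = 0"
  shows "0 \<le> g x x" "g x x = 0 \<Longrightarrow> x \<in> span {z}"
proof -
  have g_lin: "\<And>x. linear (g x)" and g_sym: "\<And>x y. g x y = g y x"
    using lor unfolding lorentzian_def by auto
  note g_simps = symmetric_bilinear_simps[OF g_lin g_sym]
  obtain e where e: "g e e = -1" and pos: "\<And>y. g y e = 0 \<Longrightarrow> y \<noteq> 0 \<Longrightarrow> g y y > 0"
    using lorentzian_spacelike_complement[OF lor] by blast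
  have "g z e \<noteq> 0" using pos[of z] assms(2,3) by fastforce
  define y where "y = x - (g x e / g z e) *\<^sub>R z"
  \<comment> \<open>subtracting the right multiple of z moves x into the spacelike complement of e\<close>
  have "g y e = 0" using \<open>g z e \<noteq> 0\<close> by (simp add: y_def g_simps)
  moreover have "g y y = g x x" using assms(3,4) by (simp add: y_def g_simps g_sym[of z x])
  ultimately have "y = 0 \<or> g x x > 0"
    using pos by fastforce
  moreover have "x \<in> span {z}" if "y = 0"
    using that unfolding y_def by (metis eq_iff_diff_eq_0 singletonI span_base span_scale)
  ultimately have cases: "x \<in> span {z} \<or> g x x > 0" by blast
  moreover have "g x x = 0" if "x \<in> span {z}"
    using that assms(3) by (auto simp: span_singleton g_simps)
  ultimately show "0 \<le> g x x" by fastforce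
  show "g x x = 0 \<Longrightarrow> x \<in> span {z}" using cases by auto
qed

text \<open>Here b stands for the first component of \<beta> = (b, -b(J\<cdot>,\<cdot>)); \<open>flat\<close> is the flatness
  of \<beta> in terms of b, and z is the light-like vector coming from the degeneracy of S(\<beta>).\<close>

locale flat_J_form =
  fixes J :: "'v::euclidean_space \<Rightarrow> 'v" and b :: "'v \<Rightarrow> 'v \<Rightarrow> 'l::euclidean_space"
    and g :: "'l \<Rightarrow> 'l \<Rightarrow> real" and z :: 'l
  assumes J_lin: "linear J" and J_sq: "\<And>X. J (J X) = - X"
    and b_lin: "\<And>X. linear (b X)" and b_sym: "\<And>X Y. b X Y = b Y X"
    and b_J: "\<And>X Y. b (J X) Y = - b X (J Y)"
    and flat: "\<And>X Y Z T. g (b X Y) (b Z T) - g (b (J X) Y) (b (J Z) T)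
                        = g (b X T) (b Z Y) - g (b (J X) T) (b (J Z) Y)"
    and g_lin: "\<And>x. linear (g x)" and g_sym: "\<And>x y. g x y = g y x"
    and z_nonzero: "z \<noteq> 0" and z_null: "g z z = 0" and z_orthogonal_b: "\<And>X Y. g z (b X Y) = 0"
    and null_orthogonal_z: "\<And>x. g x z = 0 \<Longrightarrow> g x x = 0 \<Longrightarrow> x \<in> span {z}"
begin

lemmas g_simps = symmetric_bilinear_simps[OF g_lin g_sym]

lemma J_image_eq:
  assumes "subspace V" "J ` V \<subseteq> V"
  shows "J ` V = V"
proof
  show "V \<subseteq> J ` V"
  proof
    fix X assume "X \<in> V"
    then have "- J X \<in> V" using assms subspace_neg by blast
    moreover have "X = J (- J X)" using J_sq linear_neg[OF J_lin] by simp
    ultimately show "X \<in> J ` V" by blast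
  qed
qed (rule assms(2))

lemma span_z_orthogonal: "u \<in> span {z} \<Longrightarrow> g z v = 0 \<Longrightarrow> g u v = 0"
  by (auto simp: span_singleton g_simps)

lemma span_z_null: "u \<in> span {z} \<Longrightarrow> g u u = 0"
  by (auto simp: span_singleton g_simps z_null)

lemma flat_orthogonal:
  assumes "b Y X \<in> span {z}" "b Y (J X) \<in> span {z}" "b Y T \<in> span {z}" "b Y (J T) \<in> span {z}"
  shows "g (b X T) (b Y Z) = 0"
  \<comment> \<open>two instances of flatness in which all other terms pair the image of b with \<real>z\<close>
proof -
  have span_z: "g (b A B) u = 0" if "u \<in> span {z}" for A B u
    using span_z_orthogonal[OF that] z_orthogonal_b g_sym by metis
  have "g (b X T) (b Z Y) - g (b (J X) T) (b (J Z) Y) = g (b X Y) (b Z T) - g (b (J X) Y) (b (J Z) T)"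
    by (rule flat)
  moreover have "b X Y \<in> span {z}" "b (J X) Y \<in> span {z}"
    using assms(1,2) b_sym by metis+
  moreover have "b (J Z) Y = - b (J Y) Z"
    using b_J b_sym by metis
  ultimately have "g (b X T) (b Y Z) + g (b (J X) T) (b (J Y) Z) = 0"
    using span_z by (simp add: g_simps b_sym[of Z] g_sym[of "b X Y"] g_sym[of "b (J X) Y"])
  moreover have "g (b X T) (b Y Z) - g (b (J X) T) (b (J Y) Z) = g (b X Z) (b Y T) - g (b (J X) Z) (b (J Y) T)"
    by (rule flat)
  moreover have "b (J Y) T \<in> span {z}"
    using assms(4) b_J span_neg by metis
  ultimately show ?thesis using span_z assms(3) by simp
qed

definition line_preimage :: "'v \<Rightarrow> 'v set \<Rightarrow> 'v set" where
  "line_preimage Y V = {X\<in>V. b Y X \<in> span {z} \<and> b Y (J X) \<in> span {z}}"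

definition image_plus_line :: "'v \<Rightarrow> 'v set \<Rightarrow> 'l set" where
  "image_plus_line Y V = {x + y |x y. x \<in> b Y ` V \<and> y \<in> span {z}}"

definition annihilator :: "'l set \<Rightarrow> 'v \<Rightarrow> 'v set \<Rightarrow> 'l set" where
  "annihilator D Y V = {x\<in>D. \<forall>Z\<in>V. g x (b Y Z) = 0}"

lemma dim_line_preimage:
  assumes V: "subspace V" "J ` V \<subseteq> V"
  shows "dim V + 2 \<le> dim (line_preimage Y V) + 2 * dim (image_plus_line Y V)"
proof -
  let ?N1 = "{X\<in>V. b Y X \<in> span {z}}" and ?N2 = "{X\<in>V. (b Y \<circ> J) X \<in> span {z}}"
  have lin: "linear (b Y \<circ> J)" by (rule linear_compose[OF J_lin b_lin])
  have "(b Y \<circ> J) ` V = b Y ` V"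
    by (metis J_image_eq[OF V] image_comp)
  then have "dim V + 1 = dim ?N2 + dim (image_plus_line Y V)"
    using dim_vimage_span_singleton[OF lin V(1) z_nonzero] by (simp add: image_plus_line_def)
  moreover have "dim V + 1 = dim ?N1 + dim (image_plus_line Y V)"
    using dim_vimage_span_singleton[OF b_lin V(1) z_nonzero] by (simp add: image_plus_line_def)
  moreover have "dim ?N1 + dim ?N2 \<le> dim V + dim (line_preimage Y V)"
  proof -
    have "subspace ?N1" "subspace ?N2"
      using V(1) b_lin lin
      by (auto simp: subspace_def linear_add linear_scale linear_0 span_add span_scale span_zero
          simp del: o_apply)
    moreover have "?N1 \<inter> ?N2 = line_preimage Y V" by (auto simp: line_preimage_def)
    ultimately show ?thesis using dim_add_le_dim_Int[of ?N1 ?N2 V] V(1) by auto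
  qed
  ultimately show ?thesis by linarith
qed

lemma subspace_line_preimage: "subspace V \<Longrightarrow> subspace (line_preimage Y V)"
  using b_lin J_lin
  by (auto simp: line_preimage_def subspace_def linear_add linear_scale linear_0 span_add span_scale span_zero)

lemma J_line_preimage: "J ` V \<subseteq> V \<Longrightarrow> J ` line_preimage Y V \<subseteq> line_preimage Y V"
  by (auto simp: line_preimage_def J_sq linear_neg[OF b_lin] span_neg)

lemma subspace_annihilator: "subspace D \<Longrightarrow> subspace (annihilator D Y V)"
  by (auto simp: annihilator_def subspace_def g_simps)

lemma annihilator_Int_image_plus_line: "annihilator D Y V \<inter> image_plus_line Y V \<subseteq> span {z}"
proof
  fix x assume x: "x \<in> annihilator D Y V \<inter> image_plus_line Y V"
  then obtain Z u where "Z \<in> V" "u \<in> span {z}" and x_eq: "x = b Y Z + u"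
    by (auto simp: image_plus_line_def)
  have "g z u = 0"
    using span_z_orthogonal[OF \<open>u \<in> span {z}\<close> z_null] g_sym by metis
  then have "g x z = 0"
    using z_orthogonal_b by (simp add: x_eq g_simps g_sym[of _ z])
  moreover have "g x u = 0"
    using span_z_orthogonal[OF \<open>u \<in> span {z}\<close>, of x] \<open>g x z = 0\<close> g_sym by metis
  moreover have "g x (b Y Z) = 0" using x \<open>Z \<in> V\<close> by (auto simp: annihilator_def)
  ultimately have "g x x = 0"
    by (subst (2) x_eq) (simp add: g_simps)
  with \<open>g x z = 0\<close> show "x \<in> span {z}" by (rule null_orthogonal_z)
qed

lemma dim_annihilator_add_dim_image_plus_line:
  assumes D: "subspace D" "z \<in> D" and V: "subspace V" and "b Y ` V \<subseteq> D"
  shows "dim (annihilator D Y V) + dim (image_plus_line Y V) \<le> dim D + 1"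
proof -
  have R: "subspace (image_plus_line Y V)"
    unfolding image_plus_line_def
    by (rule subspace_sums[OF linear_subspace_image[OF b_lin V] subspace_span])
  have "span {z} \<subseteq> D" using D by (simp add: span_minimal)
  then have "image_plus_line Y V \<subseteq> D"
    using assms(4) subspace_add[OF D(1)] by (auto simp: image_plus_line_def)
  then have "dim (annihilator D Y V) + dim (image_plus_line Y V)
      \<le> dim D + dim (annihilator D Y V \<inter> image_plus_line Y V)"
    by (intro dim_add_le_dim_Int subspace_annihilator D(1) R) (auto simp: annihilator_def)
  moreover have "dim (annihilator D Y V \<inter> image_plus_line Y V) \<le> 1"
    using dim_subset[OF annihilator_Int_image_plus_line] z_nonzero by simp
  ultimately show ?thesis by linarith
qed

lemma two_le_dim_image_plus_line:
  assumes V: "subspace V" and Y: "Y \<in> V" "b Y Y \<notin> span {z}"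
  shows "2 \<le> dim (image_plus_line Y V)"
proof -
  have "b Y Y + 0 \<in> image_plus_line Y V" "b Y 0 + z \<in> image_plus_line Y V"
    unfolding image_plus_line_def using Y(1) subspace_0[OF V] span_zero span_base[of z "{z}"]
    by blast+
  then have "{b Y Y, z} \<subseteq> image_plus_line Y V" by (simp add: linear_0[OF b_lin])
  moreover have "dim {b Y Y, z} = 2" using Y(2) z_nonzero by (simp add: dim_insert)
  ultimately show ?thesis by (metis dim_subset)
qed

lemma b_line_preimage_annihilator:
  "X \<in> line_preimage Y V \<Longrightarrow> T \<in> line_preimage Y V \<Longrightarrow> b X T \<in> D \<Longrightarrow> b X T \<in> annihilator D Y V"
  by (auto simp: line_preimage_def annihilator_def intro: flat_orthogonal)

lemma J_invariant_subspace_diagonal_in_line: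
  "subspace V \<Longrightarrow> J ` V \<subseteq> V \<Longrightarrow> subspace D \<Longrightarrow> z \<in> D \<Longrightarrow> (\<forall>X\<in>V. \<forall>T\<in>V. b X T \<in> D) \<Longrightarrow>
   \<exists>P. subspace P \<and> J ` P \<subseteq> P \<and> dim V + 2 \<le> dim P + 2 * dim D \<and> (\<forall>S\<in>P. b S S \<in> span {z})"
proof (induction "dim D" arbitrary: V D rule: less_induct)
  case less
  note V = less.prems(1,2) and D = less.prems(3,4) and b_V = less.prems(5)
  show ?case
  proof (cases "\<forall>S\<in>V. b S S \<in> span {z}")
    case True
    have "1 \<le> dim D" using dim_subset[of "{z}" D] D(2) z_nonzero by simp
    then show ?thesis using True V by (intro exI[of _ V]) auto
  next
    case False
    then obtain Y where Y: "Y \<in> V" "b Y Y \<notin> span {z}" by blast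
    let ?N = "line_preimage Y V" and ?R = "image_plus_line Y V" and ?D = "annihilator D Y V"
    have dim_N: "dim V + 2 \<le> dim ?N + 2 * dim ?R"
      by (rule dim_line_preimage[OF V])
    have "b Y ` V \<subseteq> D" using b_V Y(1) by auto
    then have dim_D: "dim ?D + dim ?R \<le> dim D + 1"
      by (rule dim_annihilator_add_dim_image_plus_line[OF D V(1)])
    moreover have "2 \<le> dim ?R" by (rule two_le_dim_image_plus_line[OF V(1) Y])
    ultimately have less_dim: "dim ?D < dim D" by linarith
    have z_D: "z \<in> ?D" using D(2) z_orthogonal_b by (simp add: annihilator_def)
    have b_N: "\<forall>X\<in>?N. \<forall>T\<in>?N. b X T \<in> ?D"
    proof (intro ballI)
      fix X T assume "X \<in> ?N" "T \<in> ?N"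
      moreover from this have "b X T \<in> D" using b_V by (simp add: line_preimage_def)
      ultimately show "b X T \<in> ?D" by (rule b_line_preimage_annihilator)
    qed
    obtain P where P: "subspace P" "J ` P \<subseteq> P" "dim ?N + 2 \<le> dim P + 2 * dim ?D"
      "\<forall>S\<in>P. b S S \<in> span {z}"
      using less.hyps[OF less_dim subspace_line_preimage[OF V(1)] J_line_preimage[OF V(2)]
          subspace_annihilator[OF D(1)] z_D b_N] by blast
    moreover have "dim V + 2 \<le> dim P + 2 * dim D" using P(3) dim_N dim_D by linarith
    ultimately show ?thesis by blast
  qed
qed

end

lemma fst_Sspace: "fst ` Sspace \<beta> = span {fst (\<beta> X Y) |X Y. True}"
  unfolding Sspace_def span_linear_image[OF linear_fst, symmetric]
  by (rule arg_cong[where f = span]) blast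

lemma snd_Sspace: "snd ` Sspace \<beta> = span {snd (\<beta> X Y) |X Y. True}"
  unfolding Sspace_def span_linear_image[OF linear_snd, symmetric]
  by (rule arg_cong[where f = span]) blast

definition J_invariant_part :: "('v \<Rightarrow> 'v) \<Rightarrow> ('v \<Rightarrow> 'v \<Rightarrow> 'l::real_vector) \<Rightarrow> 'v \<Rightarrow> 'v \<Rightarrow> 'l" where
  "J_invariant_part J \<alpha> X Y = \<alpha> X Y + \<alpha> (J X) (J Y)"

context
  fixes J :: "'v::real_vector \<Rightarrow> 'v" and \<alpha> :: "'v \<Rightarrow> 'v \<Rightarrow> 'l::real_vector"
  assumes J_lin: "linear J" and J_sq: "\<And>X. J (J X) = - X"
    and \<alpha>_lin: "\<And>X. linear (\<alpha> X)" and \<alpha>_sym: "\<And>X Y. \<alpha> X Y = \<alpha> Y X"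
begin

lemma linear_J_invariant_part: "linear (J_invariant_part J \<alpha> X)"
proof -
  have "linear (\<lambda>Y. \<alpha> (J X) (J Y))"
    using linear_compose[OF J_lin \<alpha>_lin[of "J X"]] by (simp add: o_def)
  then show ?thesis
    unfolding J_invariant_part_def by (rule linear_compose_add[OF \<alpha>_lin])
qed

lemma J_invariant_part_sym: "J_invariant_part J \<alpha> X Y = J_invariant_part J \<alpha> Y X"
  by (simp add: J_invariant_part_def \<alpha>_sym)

lemma J_invariant_part_J: "J_invariant_part J \<alpha> (J X) Y = - J_invariant_part J \<alpha> X (J Y)"
  using symmetric_bilinear_simps[OF \<alpha>_lin \<alpha>_sym] by (simp add: J_invariant_part_def J_sq)

lemma J_invariant_part_pair:
  "(\<alpha> X Y + \<alpha> (J X) (J Y), \<alpha> X (J Y) - \<alpha> (J X) Y)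
     = (J_invariant_part J \<alpha> X Y, - J_invariant_part J \<alpha> (J X) Y)"
  using symmetric_bilinear_simps[OF \<alpha>_lin \<alpha>_sym] by (simp add: J_invariant_part_def J_sq)

end

lemma degenerate_Sspace_null_vector:
  fixes b :: "'v::real_vector \<Rightarrow> 'v \<Rightarrow> 'l::euclidean_space" and J :: "'v \<Rightarrow> 'v"
    and g :: "'l \<Rightarrow> 'l \<Rightarrow> real"
  defines "\<beta> \<equiv> \<lambda>X Y. (b X Y, - b (J X) Y)"
  assumes g_lin: "\<And>x. linear (g x)" and g_sym: "\<And>x y. g x y = g y x"
    and b_lin: "\<And>X. linear (b X)" and b_sym: "\<And>X Y. b X Y = b Y X"
    and b_J: "\<And>X Y. b (J X) Y = - b X (J Y)" and J_sq: "\<And>X. J (J X) = - X"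
    and "degenerate_sub g (Sspace \<beta>)"
  obtains z where "z \<in> fst ` Sspace \<beta>" "z \<noteq> 0" "g z z = 0" "\<And>X Y. g z (b X Y) = 0"
proof -
  note g_simps = symmetric_bilinear_simps[OF g_lin g_sym]
  note b_simps = symmetric_bilinear_simps[OF b_lin b_sym]
  obtain v where v: "v \<in> Sspace \<beta>" "v \<noteq> 0" and radical: "\<And>u. u \<in> Sspace \<beta> \<Longrightarrow> Wip g v u = 0"
    using assms(8) unfolding degenerate_sub_def by blast
  have fst_S: "fst ` Sspace \<beta> = span {b X Y |X Y. True}"
    by (simp add: fst_Sspace \<beta>_def)
  have "{- b (J X) Y |X Y. True} = {b X Y |X Y. True}"
    using J_sq b_simps(6) by (metis minus_minus)
  then have snd_S: "snd ` Sspace \<beta> = span {b X Y |X Y. True}"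
    by (simp add: snd_Sspace \<beta>_def)
  have \<beta>_in: "\<beta> X Y \<in> Sspace \<beta>" for X Y
    unfolding Sspace_def by (rule span_base) blast
  \<comment> \<open>pairing v with \<beta>(X,Y) and with \<beta>(Y,X) separates the two components\<close>
  have sum: "g (fst v) (b X Y) + g (snd v) (b (J X) Y) = 0" for X Y
    using radical[OF \<beta>_in[of X Y]] by (simp add: Wip_def \<beta>_def g_simps)
  have diff: "g (fst v) (b X Y) - g (snd v) (b (J X) Y) = 0" for X Y
    using radical[OF \<beta>_in[of Y X]] b_J[of Y X] b_sym[of X "J Y"] b_sym[of Y X] b_sym[of "J X" Y]
    by (simp add: Wip_def \<beta>_def g_simps)
  have orth: "g (fst v) (b X Y) = 0" "g (snd v) (b (J X) Y) = 0" for X Y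
    using sum[of X Y] diff[of X Y] by linarith+
  define z where "z = (if fst v \<noteq> 0 then fst v else snd v)"
  have "z \<noteq> 0" using v(2) by (auto simp: z_def prod_eq_iff)
  have z_b: "g z (b X Y) = 0" for X Y
    using orth(1) orth(2)[of "J X" Y] by (simp add: z_def J_sq b_simps g_simps)
  have z_S: "z \<in> span {b X Y |X Y. True}"
    using v(1) fst_S snd_S by (auto simp: z_def)
  have "g z z = 0"
    using linear_eq_0_on_span[OF g_lin[of z] _ z_S] z_b by blast
  then show ?thesis using that z_S fst_S \<open>z \<noteq> 0\<close> z_b by blast
qed

lemma lorentzian_product_le_square:
  fixes g :: "'l::euclidean_space \<Rightarrow> 'l \<Rightarrow> real"
  assumes lor: "lorentzian g" and w: "w \<noteq> 0" "g w w = 0"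
    and "g (A + B) (A + B) = 0" "g (A - B) w = 0" "g C w = 0"
  shows "g A B - g C C \<le> 0"
proof -
  have g_lin: "\<And>x. linear (g x)" and g_sym: "\<And>x y. g x y = g y x"
    using lor unfolding lorentzian_def by auto
  note g_simps = symmetric_bilinear_simps[OF g_lin g_sym]
  have "0 \<le> g (A - B) (A - B)" "0 \<le> g C C"
    using lorentzian_orthogonal_null(1)[OF lor w] assms(5,6) by blast+
  moreover have "g (A + B) (A + B) - g (A - B) (A - B) = 4 * g A B"
    by (simp add: g_simps g_sym[of B A])
  ultimately show ?thesis using assms(4) by linarith
qed

lemma J_invariant_part_null_imp_nonpos:
  fixes g :: "'l::euclidean_space \<Rightarrow> 'l \<Rightarrow> real" and \<alpha> :: "'v::real_inner \<Rightarrow> 'v \<Rightarrow> 'l"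
  assumes lor: "lorentzian g" and w: "w \<noteq> 0" "g w w = 0"
    and w_prop: "\<And>X Y. g (\<alpha> X Y) w = - inner X Y"
    and "inner (J S) (J S) = inner S S" "inner S (J S) = 0"
    and "g (J_invariant_part J \<alpha> S S) (J_invariant_part J \<alpha> S S) = 0"
  shows "g (\<alpha> S S) (\<alpha> (J S) (J S)) - g (\<alpha> S (J S)) (\<alpha> S (J S)) \<le> 0"
proof (rule lorentzian_product_le_square[OF lor w])
  have g_lin: "\<And>x. linear (g x)" and g_sym: "\<And>x y. g x y = g y x"
    using lor unfolding lorentzian_def by auto
  show "g (\<alpha> S S + \<alpha> (J S) (J S)) (\<alpha> S S + \<alpha> (J S) (J S)) = 0"
    using assms(7) by (simp add: J_invariant_part_def)
  show "g (\<alpha> S S - \<alpha> (J S) (J S)) w = 0" "g (\<alpha> S (J S)) w = 0"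
    using w_prop assms(5,6) by (simp_all add: g_sym[of _ w] linear_diff[OF g_lin])
qed

lemma degenerate_flat_J_form:
  fixes J :: "'v::euclidean_space \<Rightarrow> 'v" and g :: "'l::euclidean_space \<Rightarrow> 'l \<Rightarrow> real"
    and \<alpha> :: "'v \<Rightarrow> 'v \<Rightarrow> 'l"
  defines "b \<equiv> J_invariant_part J \<alpha>"
  assumes J_lin: "linear J" and J_sq: "\<And>X. J (J X) = - X" and lor: "lorentzian g"
    and \<alpha>_lin: "\<And>X. linear (\<alpha> X)" and \<alpha>_sym: "\<And>X Y. \<alpha> X Y = \<alpha> Y X"
    and flat: "flat_form g (\<lambda>X Y. (b X Y, - b (J X) Y))"
    and degen: "degenerate_sub g (Sspace (\<lambda>X Y. (b X Y, - b (J X) Y)))"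
  obtains z where "z \<in> fst ` Sspace (\<lambda>X Y. (b X Y, - b (J X) Y))" "flat_J_form J b g z"
proof -
  have g_lin: "\<And>x. linear (g x)" and g_sym: "\<And>x y. g x y = g y x"
    using lor unfolding lorentzian_def by auto
  note b_props = linear_J_invariant_part[OF J_lin J_sq \<alpha>_lin \<alpha>_sym, folded b_def]
    J_invariant_part_sym[OF J_lin J_sq \<alpha>_lin \<alpha>_sym, folded b_def]
    J_invariant_part_J[OF J_lin J_sq \<alpha>_lin \<alpha>_sym, folded b_def]
  obtain z where z: "z \<in> fst ` Sspace (\<lambda>X Y. (b X Y, - b (J X) Y))" "z \<noteq> 0" "g z z = 0"
    "\<And>X Y. g z (b X Y) = 0"
    using degenerate_Sspace_null_vector[OF g_lin g_sym b_props J_sq degen] by blast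
  have "flat_J_form J b g z"
  proof (rule flat_J_form.intro)
    show "g (b X Y) (b Z T) - g (b (J X) Y) (b (J Z) T) = g (b X T) (b Z Y) - g (b (J X) T) (b (J Z) Y)"
      for X Y Z T
      using flat by (simp add: flat_form_def Wip_def symmetric_bilinear_simps[OF g_lin g_sym])
    show "x \<in> span {z}" if "g x z = 0" "g x x = 0" for x
      by (rule lorentzian_orthogonal_null(2)[OF lor z(2,3) that])
  qed (fact J_lin J_sq b_props g_lin g_sym z)+
  with z(1) show ?thesis by (rule that)
qed

theorem proposition6:
  fixes J :: "'v::euclidean_space \<Rightarrow> 'v"
    and g :: "'l::euclidean_space \<Rightarrow> 'l \<Rightarrow> real"
    and \<alpha> :: "'v \<Rightarrow> 'v \<Rightarrow> 'l"
    and w :: 'l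
    and n :: nat
  defines "\<beta> \<equiv> (\<lambda>X Y. (\<alpha> X Y + \<alpha> (J X) (J Y), \<alpha> X (J Y) - \<alpha> (J X) Y))"
    and "\<gamma> \<equiv> (\<lambda>X Y. (\<alpha> X Y, \<alpha> X (J Y)))"
  assumes dimV: "DIM('v) = 2 * n"
    and J_lin: "linear J"
    and J_sq: "\<And>X. J (J X) = - X"
    and J_isom: "\<And>X Y. inner (J X) (J Y) = inner X Y"
    and p_ge: "DIM('l) \<ge> 2"
    and lor: "lorentzian g"
    and \<alpha>_lin: "\<And>X. linear (\<alpha> X)"
    and \<alpha>_sym: "\<And>X Y. \<alpha> X Y = \<alpha> Y X"
    and w_light: "w \<noteq> 0" "g w w = 0"
    and w_prop: "\<And>X Y. g (\<alpha> X Y) w = - inner X Y"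
    and flat: "flat_form g \<beta>"
    and mixed: "\<And>X Y Z T. Wip g (\<beta> X Y) (\<gamma> Z T) = Wip g (\<beta> X T) (\<gamma> Z Y)"
    and degen: "degenerate_sub g (Sspace \<beta>)"
    and s_le: "int (dim (fst ` Sspace \<beta>)) \<le> int n - 1"
  shows "\<exists>P m. subspace P \<and> J ` P \<subseteq> P \<and> dim P = 2 * m \<and>
           int m \<ge> int n - int (dim (fst ` Sspace \<beta>)) + 1 \<and>
           (\<forall>S\<in>P. g (\<alpha> S S) (\<alpha> (J S) (J S)) - g (\<alpha> S (J S)) (\<alpha> S (J S)) \<le> 0)"
proof -
  interpret J: isometric_complex_structure J
    by (rule isometric_complex_structure.intro[OF J_lin J_sq J_isom])
  define b where "b = J_invariant_part J \<alpha>"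
  have \<beta>_b: "\<beta> = (\<lambda>X Y. (b X Y, - b (J X) Y))"
    by (simp add: \<beta>_def b_def J_invariant_part_pair[OF J_lin J_sq \<alpha>_lin \<alpha>_sym])
  obtain z where z: "z \<in> fst ` Sspace \<beta>" and flat_b: "flat_J_form J b g z"
    using degenerate_flat_J_form[OF J_lin J_sq lor \<alpha>_lin \<alpha>_sym] flat degen
    unfolding \<beta>_b b_def by blast
  interpret flat_J_form J b g z by (rule flat_b)
  have "\<forall>X\<in>UNIV. \<forall>T\<in>UNIV. b X T \<in> fst ` Sspace \<beta>"
    unfolding fst_Sspace \<beta>_b by (auto intro: span_base)
  then obtain P where P: "subspace P" "J ` P \<subseteq> P" "2 * n + 2 \<le> dim P + 2 * dim (fst ` Sspace \<beta>)"
    "\<forall>S\<in>P. b S S \<in> span {z}"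
    using J_invariant_subspace_diagonal_in_line[of UNIV "fst ` Sspace \<beta>"] z dimV
    by (auto simp: fst_Sspace)
  obtain m where m: "dim P = 2 * m" using J.even_dim_J_invariant[OF P(1,2)] by (auto elim: evenE)
  have "g (\<alpha> S S) (\<alpha> (J S) (J S)) - g (\<alpha> S (J S)) (\<alpha> S (J S)) \<le> 0" if "S \<in> P" for S
    using J_invariant_part_null_imp_nonpos[where J = J and S = S,
        OF lor w_light w_prop J_isom J.inner_J_self] span_z_null P(4) that
    unfolding b_def by blast
  then show ?thesis using P(1,2,3) m by (intro exI[of _ P] exI[of _ m]) auto
qed

end
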